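(* Let $\mathcal{K}\subseteq\mathcal{E}$ be a full-dimensional pointed closed convex cone in a finite-dimensional Euclidean space $\mathcal{E}$. If $\mathcal{F}$ is an amenable face of $\mathcal{K}$ of codimension $1$ (i.e. $\dim\mathcal{F}=\dim\mathcal{K}-1$), then $\mathcal{F}$ is projectionally exposed.
   Context: A face of a closed convex cone $\mathcal{K}$ is a closed convex subset $\mathcal{F}\subseteq\mathcal{K}$ such that whenever $x,y\in\mathcal{K}$ and $\alpha x+(1-\alpha)y\in\mathcal{F}$ for some $\alpha\in(0,1)$, then $x,y\in\mathcal{F}$. A face $\mathcal{F}$ is amenable if for every bounded set $B$ there exists $\kappa>0$ with $\operatorname{dist}(x,\mathcal{F})\le\kappa\operatorname{dist}(x,\mathcal{K})$ for all $x\in(\operatorname{span}\mathcal{F})\cap B$ (equivalently, for cones, a single $\kappa$ works for all $x\in\operatorname{span}\mathcal{F}$). A face $\mathcal{F}$ is projectionally exposed if there is an idempotent linear map $P:\mathcal{E}\to\mathcal{E}$ (not necessarily orthogonal) with $P(\mathcal{K})=\mathcal{F}$. Pointed means $\mathcal{K}\cap(-\mathcal{K})=\{0\}$; full-dimensional means $\dim\mathcal{K}=\dim\mathcal{E}$. *)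

theory Defs
  imports "HOL-Analysis.Analysis"
begin

definition closed_convex_cone :: "'a::euclidean_space set \<Rightarrow> bool" where
  "closed_convex_cone K \<longleftrightarrow> K \<noteq> {} \<and> closed K \<and> convex K \<and> cone K"

definition pointed_cone :: "'a::euclidean_space set \<Rightarrow> bool" where
  "pointed_cone K \<longleftrightarrow> K \<inter> uminus ` K = {0}"

definition full_dimensional :: "'a::euclidean_space set \<Rightarrow> bool" where
  "full_dimensional K \<longleftrightarrow> aff_dim K = int DIM('a)"

definition is_face :: "'a::euclidean_space set \<Rightarrow> 'a set \<Rightarrow> bool" where
  "is_face F K \<longleftrightarrow> closed F \<and> convex F \<and> F \<subseteq> K \<and>
     (\<forall>x\<in>K. \<forall>y\<in>K. \<forall>\<alpha>::real. 0 < \<alpha> \<and> \<alpha> < 1 \<and> \<alpha> *\<^sub>R x + (1 - \<alpha>) *\<^sub>R y \<in> F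
        \<longrightarrow> x \<in> F \<and> y \<in> F)"

definition amenable_face :: "'a::euclidean_space set \<Rightarrow> 'a set \<Rightarrow> bool" where
  "amenable_face F K \<longleftrightarrow> is_face F K \<and>
     (\<forall>B. bounded B \<longrightarrow> (\<exists>\<kappa>>0. \<forall>x \<in> span F \<inter> B. infdist x F \<le> \<kappa> * infdist x K))"

definition projectionally_exposed :: "'a::euclidean_space set \<Rightarrow> 'a set \<Rightarrow> bool" where
  "projectionally_exposed F K \<longleftrightarrow> is_face F K \<and>
     (\<exists>P::'a \<Rightarrow> 'a. linear P \<and> P \<circ> P = P \<and> P ` K = F)"

end

theory Submission
  imports Defs
begin

text \<open>
  Since \<open>F\<close> is a face of codimension one containing \<open>0\<close>, its span is a hyperplane
  \<open>{x. a \<bullet> x = 0}\<close>, and splitting a relative interior point of \<open>F\<close> shows that \<open>K\<close> lies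
  on one side of it, say \<open>0 \<le> a \<bullet> x\<close> on \<open>K\<close>. Fix \<open>e\<close> with \<open>a \<bullet> e = 1\<close>. For \<open>x \<in> K\<close>
  and \<open>t = a \<bullet> x\<close>, the point \<open>x - t *\<^sub>R e\<close> lies in \<open>span F\<close> within distance \<open>t * norm e\<close>
  of \<open>K\<close>, hence, by amenability (which for cones holds with one constant \<open>\<kappa>\<close> on all of
  \<open>span F\<close>), within distance \<open>\<kappa> * t * norm e\<close> of \<open>F\<close>. As \<open>F\<close> contains the cone over a
  ball in \<open>span F\<close> around a relative interior point \<open>c\<close>, this error is absorbed by a multiple
  \<open>t * M\<close> of \<open>c\<close>. Hence \<open>x - t *\<^sub>R (e - M *\<^sub>R c) \<in> F\<close>, and
  \<open>x \<mapsto> x - (a \<bullet> x) *\<^sub>R v\<close> with \<open>v = e - M *\<^sub>R c\<close> is an idempotent linear map of \<open>K\<close>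
  onto \<open>F\<close>.
\<close>

lemma closed_convex_cone_iff: "closed_convex_cone K \<longleftrightarrow> closed K \<and> convex_cone K"
  by (auto simp: closed_convex_cone_def convex_cone_def cone_def conic_def)

lemma is_face_imp_face_of:
  assumes face: "is_face F K"
  shows "F face_of K"
proof -
  have "a \<in> F \<and> b \<in> F"
    if ab: "a \<in> K" "b \<in> K" and x: "x \<in> F" "x \<in> open_segment a b" for a b x
  proof -
    obtain u where u: "0 < u" "u < 1" "x = (1 - u) *\<^sub>R a + u *\<^sub>R b"
      using x(2) by (auto simp: in_segment)
    then have "(1 - u) *\<^sub>R a + (1 - (1 - u)) *\<^sub>R b \<in> F"
      using x(1) by simp
    moreover have "0 < 1 - u" "1 - u < 1"
      using u by auto
    ultimately show ?thesis
      using face ab unfolding is_face_def by blast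
  qed
  then show ?thesis
    using face unfolding is_face_def face_of_def by blast
qed

lemma face_of_convex_cone:
  assumes "convex_cone K" "F face_of K" "F \<noteq> {}"
  shows "convex_cone F"
  using assms face_of_conic face_of_imp_convex unfolding convex_cone_def by blast

lemma face_of_convex_cone_add:
  assumes "convex_cone K" "F face_of K" "x \<in> K" "y \<in> K" "x + y \<in> F"
  shows "x \<in> F"
proof -
  have conF: "conic F"
    using assms(1,2) face_of_conic unfolding convex_cone_def by blast
  have "2 *\<^sub>R x \<in> F"
  proof (cases "x = y")
    case True
    then show ?thesis using assms(5) by (simp add: scaleR_2)
  next
    case False
    have "x + y = midpoint (2 *\<^sub>R x) (2 *\<^sub>R y)"
      by (simp add: midpoint_def scaleR_add_right[symmetric])
    then have "x + y \<in> open_segment (2 *\<^sub>R x) (2 *\<^sub>R y)"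
      using False by simp
    then show ?thesis
      using face_ofD[OF assms(2)] assms convex_cone_scaleR by (metis zero_le_numeral)
  qed
  then have "(1/2) *\<^sub>R (2 *\<^sub>R x) \<in> F"
    by (rule conic_mul[OF conF]) simp
  then show ?thesis by simp
qed

lemma conic_cball_span_absorb:
  fixes F :: "'a::real_normed_vector set"
  assumes "conic F" "c \<in> F" "cball c \<rho> \<inter> span F \<subseteq> F"
    and "b \<in> span F" "norm b \<le> s * \<rho>" "0 \<le> s"
  shows "b + s *\<^sub>R c \<in> F"
proof (cases "s = 0")
  case True
  then show ?thesis
    using assms conic_mul by fastforce
next
  case False
  then have s: "0 < s" using assms(6) by simp
  have "dist c (c + b /\<^sub>R s) = norm b / s"
    using s by (simp add: dist_norm divide_inverse_commute)
  also have "\<dots> \<le> \<rho>"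
    using s assms(5) by (simp add: pos_divide_le_eq mult.commute)
  finally have "dist c (c + b /\<^sub>R s) \<le> \<rho>" .
  moreover have "c + b /\<^sub>R s \<in> span F"
    using assms(2,4) by (simp add: span_add span_base span_scale)
  ultimately have "c + b /\<^sub>R s \<in> F"
    using assms(3) by auto
  then have "s *\<^sub>R (c + b /\<^sub>R s) \<in> F"
    using assms(1) s conic_mul by fastforce
  then show ?thesis
    using s by (simp add: scaleR_add_right add.commute)
qed

lemma infdist_scaleR_conic:
  fixes C :: "'a::euclidean_space set"
  assumes "conic C" "closed C" "0 < t"
  shows "infdist (t *\<^sub>R x) C = t * infdist x C"
proof (cases "C = {}")
  case True
  then show ?thesis by (simp add: infdist_def)
next
  case False
  have le: "infdist (s *\<^sub>R y) C \<le> s * infdist y C" if "0 < s" for s y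
  proof -
    obtain z where "z \<in> C" and z: "infdist y C = dist y z"
      using infdist_attains_inf[OF assms(2) False] by blast
    then have "infdist (s *\<^sub>R y) C \<le> dist (s *\<^sub>R y) (s *\<^sub>R z)"
      using assms(1) that by (simp add: conic_mul infdist_le)
    also have "\<dots> = s * infdist y C"
      using that by (simp add: z dist_norm scaleR_diff_right[symmetric])
    finally show ?thesis .
  qed
  have "infdist x C = infdist (inverse t *\<^sub>R (t *\<^sub>R x)) C"
    using assms(3) by simp
  also have "\<dots> \<le> inverse t * infdist (t *\<^sub>R x) C"
    by (rule le) (simp add: assms(3))
  finally have "t * infdist x C \<le> infdist (t *\<^sub>R x) C"
    using assms(3) by (simp add: field_simps)
  then show ?thesis
    using le[OF assms(3), of x] by linarith
qed

lemma infdist_bound_conic_extend: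
  fixes F K :: "'a::euclidean_space set"
  assumes "conic F" "closed F" "conic K" "closed K" "subspace S"
    and bound: "\<forall>x \<in> S \<inter> cball 0 1. infdist x F \<le> \<kappa> * infdist x K"
    and "x \<in> S"
  shows "infdist x F \<le> \<kappa> * infdist x K"
proof (cases "x = 0")
  case True
  then show ?thesis using bound assms(7) by simp
next
  case False
  define r where "r = norm x"
  have r: "0 < r" using False by (simp add: r_def)
  have "x /\<^sub>R r \<in> S \<inter> cball 0 1"
    using assms(5,7) r by (simp add: r_def subspace_scale)
  then have "r * infdist (x /\<^sub>R r) F \<le> r * (\<kappa> * infdist (x /\<^sub>R r) K)"
    using bound r by (simp add: mult_left_mono del: scaleR_scaleR)
  moreover have "r *\<^sub>R (x /\<^sub>R r) = x"
    using r by simp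
  ultimately show ?thesis
    using infdist_scaleR_conic[OF assms(1,2) r, of "x /\<^sub>R r"]
      infdist_scaleR_conic[OF assms(3,4) r, of "x /\<^sub>R r"]
    by (simp add: algebra_simps)
qed

lemma exists_cball_span_subset:
  fixes S :: "'a::euclidean_space set"
  assumes "convex S" "0 \<in> S"
  obtains c \<rho> where "c \<in> S" "0 < \<rho>" "cball c \<rho> \<inter> span S \<subseteq> S"
proof -
  obtain c where "c \<in> rel_interior S"
    using rel_interior_eq_empty[OF assms(1)] assms(2) by blast
  moreover have "affine hull S = span S"
    using assms(2) by (simp add: affine_hull_span_0 hull_inc)
  ultimately show ?thesis
    using that by (auto simp: mem_rel_interior_cball)
qed

lemma cone_one_side_of_face_hyperplane:
  fixes K F :: "'a::euclidean_space set"
  assumes K: "convex_cone K" and face: "F face_of K" and "F \<noteq> {}"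
    and hyp: "span F = {x. a \<bullet> x = 0}"
  shows "(\<forall>x\<in>K. 0 \<le> a \<bullet> x) \<or> (\<forall>x\<in>K. a \<bullet> x \<le> 0)"
proof (rule ccontr)
  assume "\<not> ?thesis"
  then obtain y1 y2 where y: "y1 \<in> K" "y2 \<in> K" and ay: "a \<bullet> y1 < 0" "0 < a \<bullet> y2"
    by (auto simp: not_le)
  have F: "convex_cone F"
    using face_of_convex_cone[OF K face \<open>F \<noteq> {}\<close>] .
  then have conF: "conic F"
    by (simp add: convex_cone_def)
  obtain c \<rho> where c: "c \<in> F" "0 < \<rho>" "cball c \<rho> \<inter> span F \<subseteq> F"
    using exists_cball_span_subset F convex_cone_contains_0 by (metis convex_cone_def)
  have FK: "F \<subseteq> K"
    using face face_of_imp_subset by blast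
  define z where "z = (a \<bullet> y2) *\<^sub>R y1 + (- (a \<bullet> y1)) *\<^sub>R y2"
  have y1K: "(a \<bullet> y2) *\<^sub>R y1 \<in> K" and y2K: "(- (a \<bullet> y1)) *\<^sub>R y2 \<in> K"
    using convex_cone_scaleR[OF K] y ay by (simp_all only: less_imp_le neg_0_le_iff_le)
  then have zK: "z \<in> K"
    unfolding z_def by (rule convex_cone_add[OF K])
  have "a \<bullet> z = 0"
    by (simp add: z_def inner_diff_right)
  then have "- z \<in> span F"
    using hyp by simp
  define s where "s = norm z / \<rho>"
  have s: "0 \<le> s" "norm (- z) \<le> s * \<rho>"
    using c(2) by (simp_all add: s_def)
  \<comment> \<open>\<open>s *\<^sub>R c\<close> is \<open>z\<close> plus a point of \<open>F\<close>, so the face property puts \<open>z\<close> into \<open>F\<close>.\<close>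
  have "- z + s *\<^sub>R c \<in> F"
    using conic_cball_span_absorb[OF conF c(1,3) \<open>- z \<in> span F\<close> s(2,1)] .
  moreover have "z + (- z + s *\<^sub>R c) \<in> F"
    using conF c(1) s(1) by (simp add: conic_mul)
  ultimately have "z \<in> F"
    using face_of_convex_cone_add[OF K face zK] FK by blast
  then have "(a \<bullet> y2) *\<^sub>R y1 \<in> F"
    using face_of_convex_cone_add[OF K face y1K y2K] by (simp add: z_def)
  then have "a \<bullet> ((a \<bullet> y2) *\<^sub>R y1) = 0"
    using hyp span_base by blast
  then show False
    using ay by simp
qed

lemma convex_cone_facet_supporting_hyperplane:
  fixes K F :: "'a::euclidean_space set"
  assumes K: "convex_cone K" and face: "F face_of K"
    and dim: "aff_dim F = int DIM('a) - 1"
  obtains a where "a \<noteq> 0" "span F = {x. a \<bullet> x = 0}" "\<forall>x\<in>K. 0 \<le> a \<bullet> x"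
proof -
  have "F \<noteq> {}"
    using dim DIM_positive[where 'a='a] by (auto simp del: DIM_positive)
  then have "0 \<in> F"
    using face_of_convex_cone[OF K face] convex_cone_contains_0 by blast
  then have "dim F = DIM('a) - 1"
    using dim aff_dim_eq_dim[of 0 F] by (simp add: hull_inc)
  then obtain a0 :: 'a where a0: "a0 \<noteq> 0" "span F = {x. a0 \<bullet> x = 0}"
    using dim_eq_hyperplane by blast
  show ?thesis
  proof (cases "\<forall>x\<in>K. 0 \<le> a0 \<bullet> x")
    case True
    then show ?thesis
      using that a0 by blast
  next
    case False
    then have "\<forall>x\<in>K. 0 \<le> (- a0) \<bullet> x"
      using cone_one_side_of_face_hyperplane[OF K face \<open>F \<noteq> {}\<close> a0(2)] by auto
    then show ?thesis
      using that[of "- a0"] a0 by simp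
  qed
qed

lemma amenable_face_uniform_bound:
  fixes K F :: "'a::euclidean_space set"
  assumes K: "closed K" "convex_cone K" and amenable: "amenable_face F K"
  obtains \<kappa> where "0 < \<kappa>" "\<forall>x\<in>span F. infdist x F \<le> \<kappa> * infdist x K"
proof -
  obtain \<kappa> where "0 < \<kappa>" and bound: "\<forall>x \<in> span F \<inter> cball 0 1. infdist x F \<le> \<kappa> * infdist x K"
    using amenable bounded_cball unfolding amenable_face_def by blast
  have "closed F" "F face_of K"
    using amenable by (simp_all add: amenable_face_def is_face_def is_face_imp_face_of)
  moreover have "conic K"
    using K(2) by (simp add: convex_cone_def)
  ultimately have "conic F"
    using face_of_conic by blast
  then have "\<forall>x\<in>span F. infdist x F \<le> \<kappa> * infdist x K"
    using infdist_bound_conic_extend[OF _ \<open>closed F\<close> \<open>conic K\<close> K(1) subspace_span bound] by blast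
  with \<open>0 < \<kappa>\<close> show ?thesis
    using that by blast
qed

lemma convex_cone_infdist_absorb:
  fixes F :: "'a::euclidean_space set"
  assumes F: "convex_cone F" "closed F"
    and c: "c \<in> F" "cball c \<rho> \<inter> span F \<subseteq> F"
    and "p \<in> span F" "infdist p F \<le> s * \<rho>" "0 \<le> s"
  shows "p + s *\<^sub>R c \<in> F"
proof -
  obtain f where f: "f \<in> F" "infdist p F = dist p f"
    using infdist_attains_inf[OF F(2)] c(1) by blast
  have "norm (p - f) \<le> s * \<rho>"
    using f(2) assms(6) by (simp add: dist_norm)
  moreover have "p - f \<in> span F"
    using assms(5) f(1) by (simp add: span_base span_diff)
  moreover have "conic F"
    using F(1) by (simp add: convex_cone_def)
  ultimately have "(p - f) + s *\<^sub>R c \<in> F"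
    using conic_cball_span_absorb c assms(7) by blast
  then have "f + ((p - f) + s *\<^sub>R c) \<in> F"
    by (rule convex_cone_add[OF F(1) f(1)])
  then show ?thesis
    by simp
qed

lemma exists_projection_direction:
  fixes K F :: "'a::euclidean_space set"
  assumes F: "convex_cone F" "closed F"
    and hyp: "a \<noteq> 0" "span F = {x. a \<bullet> x = 0}"
    and K: "\<forall>x\<in>K. 0 \<le> a \<bullet> x"
    and bound: "0 \<le> \<kappa>" "\<forall>x\<in>span F. infdist x F \<le> \<kappa> * infdist x K"
  shows "\<exists>v. a \<bullet> v = 1 \<and> (\<forall>x\<in>K. x - (a \<bullet> x) *\<^sub>R v \<in> F)"
proof -
  obtain c \<rho> where c: "c \<in> F" "0 < \<rho>" "cball c \<rho> \<inter> span F \<subseteq> F"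
    using exists_cball_span_subset F(1) convex_cone_contains_0 by (metis convex_cone_def)
  define e where "e = a /\<^sub>R (a \<bullet> a)"
  have ae: "a \<bullet> e = 1"
    using hyp(1) by (simp add: e_def)
  define M where "M = \<kappa> * norm e / \<rho>"
  define v where "v = e - M *\<^sub>R c"
  have "a \<bullet> c = 0"
    using c(1) hyp(2) span_base by blast
  then have av: "a \<bullet> v = 1"
    by (simp add: v_def inner_diff_right ae)
  have "x - (a \<bullet> x) *\<^sub>R v \<in> F" if x: "x \<in> K" for x
  proof -
    define t where "t = a \<bullet> x"
    have t: "0 \<le> t"
      using K x by (simp add: t_def)
    define p where "p = x - t *\<^sub>R e"
    have p: "p \<in> span F"
      using hyp(2) ae by (simp add: p_def t_def inner_diff_right)
    have "infdist p K \<le> dist p x"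
      using x by (rule infdist_le)
    also have "\<dots> = t * norm e"
      using t by (simp add: p_def dist_norm)
    finally have "infdist p F \<le> \<kappa> * (t * norm e)"
      using bound p by (meson mult_left_mono order_trans)
    also have "\<dots> = (t * M) * \<rho>"
      using c(2) by (simp add: M_def)
    finally have "p + (t * M) *\<^sub>R c \<in> F"
      using convex_cone_infdist_absorb[OF F c(1,3) p] t bound(1) c(2) by (simp add: M_def)
    moreover have "p + (t * M) *\<^sub>R c = x - t *\<^sub>R v"
      by (simp add: p_def v_def algebra_simps)
    ultimately show ?thesis
      by (simp add: t_def)
  qed
  with av show ?thesis
    by blast
qed

lemma projectionally_exposedI:
  assumes "is_face F K" "a \<bullet> v = 1"
    and "\<forall>x\<in>K. x - (a \<bullet> x) *\<^sub>R v \<in> F" "\<forall>x\<in>F. a \<bullet> x = 0"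
  shows "projectionally_exposed F K"
proof -
  define P where "P x = x - (a \<bullet> x) *\<^sub>R v" for x
  have "linear P"
    by (rule linearI) (simp_all add: P_def inner_add_right algebra_simps)
  moreover have "P \<circ> P = P"
    using assms(2) by (simp add: fun_eq_iff P_def inner_diff_right)
  moreover have "P ` K = F"
  proof
    show "P ` K \<subseteq> F" using assms(3) by (auto simp: P_def)
    show "F \<subseteq> P ` K"
    proof
      fix y assume "y \<in> F"
      moreover have "F \<subseteq> K" using assms(1) by (simp add: is_face_def)
      moreover have "P y = y" using assms(4) \<open>y \<in> F\<close> by (simp add: P_def)
      ultimately show "y \<in> P ` K" by (metis image_eqI subsetD)
    qed
  qed
  ultimately show ?thesis
    using assms(1) unfolding projectionally_exposed_def by blast
qed

theorem theorem6p2: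
  fixes K F :: "'a::euclidean_space set"
  assumes "closed_convex_cone K"
    and "full_dimensional K"
    and "pointed_cone K"
    and "amenable_face F K"
    and "aff_dim F = aff_dim K - 1"
  shows "projectionally_exposed F K"
proof -
  have K: "closed K" "convex_cone K"
    using assms(1) closed_convex_cone_iff by auto
  have face: "is_face F K"
    using assms(4) by (simp add: amenable_face_def)
  then have Fface: "F face_of K" and Fclosed: "closed F"
    by (simp_all add: is_face_imp_face_of is_face_def)
  have dimF: "aff_dim F = int DIM('a) - 1"
    using assms(2,5) by (simp add: full_dimensional_def)
  then obtain a where a: "a \<noteq> 0" "span F = {x. a \<bullet> x = 0}" "\<forall>x\<in>K. 0 \<le> a \<bullet> x"
    using convex_cone_facet_supporting_hyperplane[OF K(2) Fface] by blast
  have "F \<noteq> {}"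
    using dimF DIM_positive[where 'a='a] by (auto simp del: DIM_positive)
  then have F: "convex_cone F"
    using face_of_convex_cone[OF K(2) Fface] by blast
  obtain \<kappa> where "0 < \<kappa>" "\<forall>x\<in>span F. infdist x F \<le> \<kappa> * infdist x K"
    using amenable_face_uniform_bound[OF K assms(4)] by blast
  then obtain v where "a \<bullet> v = 1" "\<forall>x\<in>K. x - (a \<bullet> x) *\<^sub>R v \<in> F"
    using exists_projection_direction[OF F Fclosed a, of \<kappa>] by auto
  moreover have "\<forall>x\<in>F. a \<bullet> x = 0"
    using a(2) span_base by blast
  ultimately show ?thesis
    using projectionally_exposedI[OF face] by blast
qed

end
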